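(* Let $q$ be a prime power and let $n,k$ be integers with $3\le k\le n-2\le q-2$. Let $\Lambda=\{\alpha_1,\dots,\alpha_n\}\subseteq\mathbb{F}_q$ with the $\alpha_i$ pairwise distinct, and let $C_{k-1,k-2}$ be the linear code generated by the $k\times n$ matrix whose rows are $(\alpha_1^{e},\dots,\alpha_n^{e})$ for $e=0,1,\dots,k-3,k,k+1$. Then $C_{k-1,k-2}$ is MDS if and only if $$\sigma_2(\beta_1,\dots,\beta_k)^2-\sigma_1(\beta_1,\dots,\beta_k)\,\sigma_3(\beta_1,\dots,\beta_k)\neq 0$$ for every $k$-element subset $\{\beta_1,\dots,\beta_k\}\subseteq\Lambda$ (with the $\beta_i$ distinct).
   Context: Convention: $0^0=1$. $\sigma_t(x_1,\dots,x_m)$ denotes the $t$-th elementary symmetric polynomial ($\sigma_0=1$, $\sigma_t=0$ for $t>m$). An $[n,k,d]$ linear code is MDS if $d=n-k+1$. *)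

theory Defs
  imports Main
begin

definition esym :: "nat \<Rightarrow> 'a::comm_ring_1 set \<Rightarrow> 'a" where
  "esym t B = (\<Sum>S\<in>{S. S \<subseteq> B \<and> card S = t}. \<Prod>S)"

definition gen_code :: "nat \<Rightarrow> nat \<Rightarrow> (nat \<Rightarrow> nat \<Rightarrow> 'a::field) \<Rightarrow> 'a list set" where
  "gen_code r n G = {map (\<lambda>i. \<Sum>j<r. c j * G j i) [0..<n] | c. True}"

definition hweight :: "'a::zero list \<Rightarrow> nat" where
  "hweight w = length (filter (\<lambda>x. x \<noteq> 0) w)"

definition min_dist :: "'a::zero list set \<Rightarrow> nat" where
  "min_dist C = Min {hweight w | w. w \<in> C \<and> (\<exists>x\<in>set w. x \<noteq> 0)}"

definition code_dim :: "'a::{finite,field} list set \<Rightarrow> nat" where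
  "code_dim C = (THE m. card C = card (UNIV::'a set) ^ m)"

definition is_MDS :: "nat \<Rightarrow> 'a::{finite,field} list set \<Rightarrow> bool" where
  "is_MDS n C \<longleftrightarrow> min_dist C = n - code_dim C + 1"

definition row_exp :: "nat \<Rightarrow> nat \<Rightarrow> nat" where
  "row_exp k j = (if j < k - 2 then j else j + 2)"

definition code_C :: "nat \<Rightarrow> nat \<Rightarrow> (nat \<Rightarrow> 'a::field) \<Rightarrow> 'a list set" where
  "code_C n k \<alpha> = gen_code k n (\<lambda>j i. \<alpha> i ^ row_exp k j)"

end

theory Submission
  imports Defs "HOL-Computational_Algebra.Polynomial" "HOL-Library.FuncSet"
begin

text \<open>
  A codeword lists the values at the points \<open>\<alpha> i\<close> of a polynomial f of degree at most k + 1
  without the monomials X^(k-2) and X^(k-1). Since k + 1 < n, the code has q^k words, and by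
  the Singleton bound it is MDS iff no nonzero such f vanishes at k of the points. If f vanishes
  on a k-set B, it is a multiple P_B (a + c X) of P_B = (X - b_1) ... (X - b_k), and by Vieta's
  formulas its coefficients at X^(k-2) and X^(k-1) are a \<sigma>2 - c \<sigma>3 and c \<sigma>2 - a \<sigma>1. This
  linear system has a nonzero solution (a, c) exactly when \<sigma>2^2 = \<sigma>1 \<sigma>3.
\<close>

section \<open>Vanishing polynomials and Vieta's formulas\<close>

definition vanishing_poly :: "'a::comm_ring_1 set \<Rightarrow> 'a poly" where
  "vanishing_poly B = (\<Prod>b\<in>B. [:-b, 1:])"

lemma coeff_vanishing_poly:
  fixes B :: "'a::comm_ring_1 set"
  assumes "finite B" and "r \<le> card B"
  shows "coeff (vanishing_poly B) (card B - r) = (-1) ^ r * esym r B"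
proof -
  have "vanishing_poly B = (\<Prod>b\<in>B. [:-b:] + monom 1 1)"
    unfolding vanishing_poly_def by (intro prod.cong) (simp_all add: monom_Suc)
  also have "\<dots> = (\<Sum>S\<in>Pow B. monom ((-1) ^ card S * \<Prod>S) (card B - card S))"
    using assms(1) by (simp add: prod_add prod_to_poly prod_uminus monom_power smult_monom
        card_Diff_subset finite_subset)
  finally have expand: "vanishing_poly B = \<dots>" .
  have "coeff (vanishing_poly B) (card B - r)
      = (\<Sum>S\<in>Pow B. if card S = r then (-1) ^ r * \<Prod>S else 0)"
    unfolding expand coeff_sum
  proof (rule sum.cong)
    fix S assume "S \<in> Pow B"
    then have "card S \<le> card B" using assms(1) by (simp add: card_mono)
    then show "coeff (monom ((-1) ^ card S * \<Prod>S) (card B - card S)) (card B - r)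
        = (if card S = r then (-1) ^ r * \<Prod>S else 0)"
      using assms(2) by (auto simp: coeff_monom)
  qed simp
  also have "\<dots> = (\<Sum>S\<in>{S. S \<subseteq> B \<and> card S = r}. (-1) ^ r * \<Prod>S)"
    using assms(1) by (simp add: sum.inter_filter[symmetric] Pow_def)
  finally show ?thesis
    by (simp add: esym_def sum_distrib_left)
qed

lemma degree_vanishing_poly: "finite B \<Longrightarrow> degree (vanishing_poly B) = card B"
  for B :: "'a::idom set"
  by (simp add: vanishing_poly_def degree_prod_sum_eq)

lemma lead_coeff_vanishing_poly: "lead_coeff (vanishing_poly B) = 1"
  for B :: "'a::idom set"
  by (simp add: vanishing_poly_def lead_coeff_prod)

lemma vanishing_poly_nonzero: "vanishing_poly B \<noteq> 0"
  for B :: "'a::idom set"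
  using lead_coeff_vanishing_poly[of B] by auto

lemma vanishing_poly_dvd_iff:
  fixes f :: "'a::idom poly"
  assumes "finite B"
  shows "vanishing_poly B dvd f \<longleftrightarrow> (\<forall>b\<in>B. poly f b = 0)"
proof
  assume "vanishing_poly B dvd f"
  then obtain g where "f = vanishing_poly B * g" by (elim dvdE)
  moreover have "poly (vanishing_poly B) b = 0" if "b \<in> B" for b
    using that assms by (auto simp: vanishing_poly_def poly_prod prod_zero_iff)
  ultimately show "\<forall>b\<in>B. poly f b = 0" by simp
next
  show "\<forall>b\<in>B. poly f b = 0 \<Longrightarrow> vanishing_poly B dvd f"
    using assms
  proof (induction B arbitrary: f rule: finite_induct)
    case empty
    then show ?case by (simp add: vanishing_poly_def)
  next
    case (insert x B)
    then obtain g where g: "f = [:-x, 1:] * g"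
      by (auto simp: poly_eq_0_iff_dvd elim!: dvdE)
    have "\<forall>b\<in>B. poly g b = 0"
      using insert.prems insert.hyps(2) by (auto simp: g)
    then have "vanishing_poly B dvd g" by (rule insert.IH)
    then have "[:-x, 1:] * vanishing_poly B dvd f"
      unfolding g by (rule mult_dvd_mono[OF dvd_refl])
    then show ?case
      using insert.hyps by (simp add: vanishing_poly_def)
  qed
qed

lemma ex_vanishing_degree_le_Suc_card_iff:
  fixes Q :: "'a::idom poly \<Rightarrow> bool"
  assumes "finite B"
  shows "(\<exists>f. (\<forall>b\<in>B. poly f b = 0) \<and> degree f \<le> card B + 1 \<and> Q f)
    \<longleftrightarrow> (\<exists>a c. Q (vanishing_poly B * [:a, c:]))"
proof
  assume "\<exists>f. (\<forall>b\<in>B. poly f b = 0) \<and> degree f \<le> card B + 1 \<and> Q f"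
  then obtain f where vanish: "\<forall>b\<in>B. poly f b = 0" and deg: "degree f \<le> card B + 1"
    and "Q f" by blast
  from vanish have "vanishing_poly B dvd f"
    using vanishing_poly_dvd_iff[OF assms] by blast
  then obtain g where f: "f = vanishing_poly B * g" by (elim dvdE)
  have "degree g \<le> 1"
  proof (cases "g = 0")
    case False
    then show ?thesis
      using deg by (simp add: f degree_mult_eq vanishing_poly_nonzero degree_vanishing_poly assms)
  qed simp
  then have "coeff g i = coeff [:coeff g 0, coeff g 1:] i" for i
    using coeff_eq_0[of g i] by (cases i) (auto simp: coeff_pCons split: nat.split)
  then have "f = vanishing_poly B * [:coeff g 0, coeff g 1:]"
    unfolding f by (metis poly_eqI)
  with \<open>Q f\<close> show "\<exists>a c. Q (vanishing_poly B * [:a, c:])" by blast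
next
  assume "\<exists>a c. Q (vanishing_poly B * [:a, c:])"
  then obtain a c where "Q (vanishing_poly B * [:a, c:])" by blast
  moreover have "degree (vanishing_poly B * [:a, c:]) \<le> card B + 1"
    using degree_mult_le[of "vanishing_poly B" "[:a, c:]"] degree_pCons_le[of a "[:c:]"]
    by (simp add: degree_vanishing_poly assms)
  moreover have "\<forall>b\<in>B. poly (vanishing_poly B * [:a, c:]) b = 0"
    using vanishing_poly_dvd_iff[OF assms] dvd_triv_left by blast
  ultimately show "\<exists>f. (\<forall>b\<in>B. poly f b = 0) \<and> degree f \<le> card B + 1 \<and> Q f" by blast
qed

lemma coeff_mult_linear_Suc:
  "coeff (p * [:a, c:]) (Suc m) = a * coeff p (Suc m) + c * coeff p m"
  by (simp add: algebra_simps)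

lemma nonzero_solution_2x2_iff:
  fixes x y z :: "'a::idom"
  shows "(\<exists>a c. (a, c) \<noteq> (0, 0) \<and> a * x = c * y \<and> a * y = c * z) \<longleftrightarrow> y ^ 2 = x * z"
proof
  assume "\<exists>a c. (a, c) \<noteq> (0, 0) \<and> a * x = c * y \<and> a * y = c * z"
  then obtain a c where ac: "(a, c) \<noteq> (0, 0)" "a * x = c * y" "a * y = c * z" by blast
  have "a * (y ^ 2 - x * z) = y * (a * y) - z * (a * x)"
    by (simp add: power2_eq_square algebra_simps)
  also have "\<dots> = y * (c * z) - z * (c * y)"
    by (simp only: ac(2,3))
  also have "\<dots> = 0"
    by (simp add: algebra_simps)
  finally have "a * (y ^ 2 - x * z) = 0" .
  have "c * (y ^ 2 - x * z) = y * (c * y) - x * (c * z)"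
    by (simp add: power2_eq_square algebra_simps)
  also have "\<dots> = y * (a * x) - x * (a * y)"
    by (simp only: ac(2,3))
  also have "\<dots> = 0"
    by (simp add: algebra_simps)
  finally have "c * (y ^ 2 - x * z) = 0" .
  with \<open>a * (y ^ 2 - x * z) = 0\<close> show "y ^ 2 = x * z" using ac(1) by auto
next
  assume "y ^ 2 = x * z"
  then show "\<exists>a c. (a, c) \<noteq> (0, 0) \<and> a * x = c * y \<and> a * y = c * z"
  proof (cases "x = 0 \<and> y = 0")
    case True
    then have "(1::'a, 0::'a) \<noteq> (0, 0) \<and> 1 * x = 0 * y \<and> 1 * y = 0 * z" by simp
    then show ?thesis by blast
  next
    case False
    with \<open>y ^ 2 = x * z\<close> have "(y, x) \<noteq> (0, 0) \<and> y * x = x * y \<and> y * y = x * z"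
      by (auto simp: power2_eq_square mult.commute)
    then show ?thesis by blast
  qed
qed

lemma ex_gap_poly_vanishing_iff:
  fixes B :: "'a::idom set"
  assumes "finite B" and "card B = k" and "3 \<le> k"
  shows "(\<exists>f. (\<forall>b\<in>B. poly f b = 0) \<and> degree f \<le> k + 1 \<and> f \<noteq> 0
            \<and> coeff f (k - 1) = 0 \<and> coeff f (k - 2) = 0)
    \<longleftrightarrow> esym 2 B ^ 2 - esym 1 B * esym 3 B = 0"
proof -
  let ?P = "vanishing_poly B"
  have "coeff ?P (Suc (k - 2)) = - esym 1 B" "coeff ?P (Suc (k - 3)) = esym 2 B"
    "coeff ?P (k - 3) = - esym 3 B"
    using coeff_vanishing_poly[OF assms(1), of 1] coeff_vanishing_poly[OF assms(1), of 2]
      coeff_vanishing_poly[OF assms(1), of 3] assms(2,3)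
    by (simp_all add: Suc_diff_Suc numeral_eq_Suc)
  then have coeffs: "coeff (?P * [:a, c:]) (k - 1) = - (a * esym 1 B - c * esym 2 B)"
    "coeff (?P * [:a, c:]) (k - 2) = a * esym 2 B - c * esym 3 B" for a c
    using assms(3) coeff_mult_linear_Suc[of ?P a c "k - 2"] coeff_mult_linear_Suc[of ?P a c "k - 3"]
    by (simp_all add: Suc_diff_Suc numeral_eq_Suc)
  have nonzero: "?P * [:a, c:] \<noteq> 0 \<longleftrightarrow> (a, c) \<noteq> (0, 0)" for a c
    by (simp only: mult_eq_0_iff vanishing_poly_nonzero) simp
  have "(\<exists>f. (\<forall>b\<in>B. poly f b = 0) \<and> degree f \<le> k + 1 \<and> f \<noteq> 0
            \<and> coeff f (k - 1) = 0 \<and> coeff f (k - 2) = 0)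
      \<longleftrightarrow> (\<exists>a c. ?P * [:a, c:] \<noteq> 0 \<and> coeff (?P * [:a, c:]) (k - 1) = 0
            \<and> coeff (?P * [:a, c:]) (k - 2) = 0)"
    using ex_vanishing_degree_le_Suc_card_iff[OF assms(1),
        where Q = "\<lambda>f. f \<noteq> 0 \<and> coeff f (k - 1) = 0 \<and> coeff f (k - 2) = 0"]
    unfolding assms(2) .
  also have "\<dots> \<longleftrightarrow> (\<exists>a c. (a, c) \<noteq> (0, 0) \<and> a * esym 1 B = c * esym 2 B
            \<and> a * esym 2 B = c * esym 3 B)"
    by (simp only: coeffs nonzero neg_equal_0_iff_equal right_minus_eq)
  also have "\<dots> \<longleftrightarrow> esym 2 B ^ 2 = esym 1 B * esym 3 B"
    by (rule nonzero_solution_2x2_iff)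
  finally show ?thesis by simp
qed

section \<open>Evaluation codes\<close>

definition supported_polys :: "nat set \<Rightarrow> 'a::zero poly set" where
  "supported_polys E = {f. \<forall>m. m \<notin> E \<longrightarrow> coeff f m = 0}"

lemma diff_supported_polys:
  fixes f g :: "'a::ab_group_add poly"
  shows "f \<in> supported_polys E \<Longrightarrow> g \<in> supported_polys E \<Longrightarrow> f - g \<in> supported_polys E"
  by (simp add: supported_polys_def)

lemma degree_supported_less:
  assumes "f \<in> supported_polys E" and "E \<subseteq> {..<n}" and "E \<noteq> {}"
  shows "degree f < n"
  using assms by (intro degree_lessI) (auto simp: supported_polys_def)

lemma supported_polys_atMost_diff:
  "f \<in> supported_polys ({..d} - D) \<longleftrightarrow> degree f \<le> d \<and> (\<forall>m\<in>D. coeff f m = 0)"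
  by (auto simp: supported_polys_def intro: degree_le coeff_eq_0)

lemma coeff_sum_monom:
  "finite E \<Longrightarrow> coeff (\<Sum>m\<in>E. monom (h m) m) i = (if i \<in> E then h i else 0)"
  by (simp add: coeff_sum coeff_monom)

lemma sum_monom_coeff_supported:
  "finite E \<Longrightarrow> f \<in> supported_polys E \<Longrightarrow> (\<Sum>m\<in>E. monom (coeff f m) m) = f"
  by (intro poly_eqI) (auto simp: coeff_sum_monom supported_polys_def)

lemma card_supported_polys:
  assumes "finite E"
  shows "card (supported_polys E :: 'a::{finite,comm_monoid_add} poly set) = card (UNIV :: 'a set) ^ card E"
proof -
  have "bij_betw (\<lambda>f. restrict (coeff f) E) (supported_polys E) (E \<rightarrow>\<^sub>E (UNIV :: 'a set))"
  proof (rule bij_betw_imageI)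
    show "inj_on (\<lambda>f. restrict (coeff f) E) (supported_polys E :: 'a poly set)"
    proof (rule inj_onI, rule poly_eqI)
      fix f g :: "'a poly" and m
      assume "f \<in> supported_polys E" "g \<in> supported_polys E"
        and "restrict (coeff f) E = restrict (coeff g) E"
      then show "coeff f m = coeff g m"
        by (cases "m \<in> E") (auto simp: supported_polys_def dest: fun_cong[of _ _ m])
    qed
    have "E \<rightarrow>\<^sub>E UNIV \<subseteq> (\<lambda>f. restrict (coeff f) E) ` (supported_polys E :: 'a poly set)"
    proof
      fix h :: "nat \<Rightarrow> 'a" assume "h \<in> E \<rightarrow>\<^sub>E UNIV"
      then have "h = restrict (coeff (\<Sum>m\<in>E. monom (h m) m)) E"
        using assms by (auto simp: coeff_sum_monom PiE_iff extensional_def)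
      moreover have "(\<Sum>m\<in>E. monom (h m) m) \<in> supported_polys E"
        using assms by (simp add: supported_polys_def coeff_sum_monom)
      ultimately show "h \<in> (\<lambda>f. restrict (coeff f) E) ` supported_polys E" by blast
    qed
    then show "(\<lambda>f. restrict (coeff f) E) ` (supported_polys E :: 'a poly set) = E \<rightarrow>\<^sub>E UNIV"
      by auto
  qed
  then show ?thesis
    using assms by (simp add: bij_betw_same_card card_PiE)
qed

definition eval_word :: "nat \<Rightarrow> (nat \<Rightarrow> 'a::comm_semiring_0) \<Rightarrow> 'a poly \<Rightarrow> 'a list" where
  "eval_word n \<alpha> f = map (\<lambda>i. poly f (\<alpha> i)) [0..<n]"

lemma length_eval_word [simp]: "length (eval_word n \<alpha> f) = n"
  by (simp add: eval_word_def)

lemma map2_minus_eval_word: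
  fixes f g :: "'a::comm_ring poly"
  shows "map2 (-) (eval_word n \<alpha> f) (eval_word n \<alpha> g) = eval_word n \<alpha> (f - g)"
  by (simp add: eval_word_def map2_map_map poly_diff)

lemma hweight_eval_word:
  "hweight (eval_word n \<alpha> f) = n - card {i. i < n \<and> poly f (\<alpha> i) = 0}"
proof -
  have "{i. i < n \<and> eval_word n \<alpha> f ! i \<noteq> 0} = {..<n} - {i. i < n \<and> poly f (\<alpha> i) = 0}"
    by (auto simp: eval_word_def)
  moreover have "card ({..<n} - {i. i < n \<and> poly f (\<alpha> i) = 0}) = n - card {i. i < n \<and> poly f (\<alpha> i) = 0}"
    by (subst card_Diff_subset) auto
  ultimately show ?thesis
    by (simp add: hweight_def length_filter_conv_card)
qed

lemma eval_word_eq_iff: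
  fixes f g :: "'a::idom poly"
  assumes "inj_on \<alpha> {..<n}" and "degree f < n" and "degree g < n"
  shows "eval_word n \<alpha> f = eval_word n \<alpha> g \<longleftrightarrow> f = g"
proof
  assume "eval_word n \<alpha> f = eval_word n \<alpha> g"
  then have "poly f x = poly g x" if "x \<in> \<alpha> ` {..<n}" for x
    using that by (auto simp: eval_word_def map_eq_conv)
  moreover have "card (\<alpha> ` {..<n}) = n"
    using assms(1) by (simp add: card_image)
  ultimately show "f = g"
    using assms(2,3) by (intro poly_eqI_degree[of "\<alpha> ` {..<n}"]) auto
qed simp

lemma eval_word_nonzero_iff:
  fixes f :: "'a::idom poly"
  assumes "inj_on \<alpha> {..<n}" and "degree f < n"
  shows "(\<exists>x\<in>set (eval_word n \<alpha> f). x \<noteq> 0) \<longleftrightarrow> f \<noteq> 0"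
proof -
  have "(\<exists>x\<in>set (eval_word n \<alpha> f). x \<noteq> 0) \<longleftrightarrow> eval_word n \<alpha> f \<noteq> eval_word n \<alpha> 0"
    by (auto simp: eval_word_def)
  also have "\<dots> \<longleftrightarrow> f \<noteq> 0"
    using eval_word_eq_iff[OF assms(1), of f 0] assms(2) by simp
  finally show ?thesis .
qed

lemma le_card_indices_iff:
  fixes \<alpha> :: "nat \<Rightarrow> 'a"
  assumes "inj_on \<alpha> {..<n}"
  shows "k \<le> card {i. i < n \<and> P (\<alpha> i)} \<longleftrightarrow> (\<exists>B\<subseteq>\<alpha> ` {..<n}. card B = k \<and> (\<forall>b\<in>B. P b))"
proof
  assume "k \<le> card {i. i < n \<and> P (\<alpha> i)}"
  then obtain I where I: "I \<subseteq> {i. i < n \<and> P (\<alpha> i)}" "card I = k"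
    using obtain_subset_with_card_n by metis
  then have "card (\<alpha> ` I) = k"
    using card_image[OF inj_on_subset[OF assms]] by auto
  with I(1) show "\<exists>B\<subseteq>\<alpha> ` {..<n}. card B = k \<and> (\<forall>b\<in>B. P b)"
    by (intro exI[of _ "\<alpha> ` I"]) auto
next
  have fin: "finite {i. i < n \<and> P (\<alpha> i)}" by simp
  assume "\<exists>B\<subseteq>\<alpha> ` {..<n}. card B = k \<and> (\<forall>b\<in>B. P b)"
  then obtain B where B: "B \<subseteq> \<alpha> ` {..<n}" "card B = k" "\<forall>b\<in>B. P b" by blast
  then have "B \<subseteq> \<alpha> ` {i. i < n \<and> P (\<alpha> i)}" by auto
  then have "k \<le> card (\<alpha> ` {i. i < n \<and> P (\<alpha> i)})"
    using B(2) fin by (auto intro: card_mono)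
  also have "\<dots> \<le> card {i. i < n \<and> P (\<alpha> i)}" using fin by (rule card_image_le)
  finally show "k \<le> card {i. i < n \<and> P (\<alpha> i)}" .
qed

lemma one_less_card_UNIV_field: "1 < card (UNIV :: 'a::{finite,field} set)"
proof -
  have "card {0, 1 :: 'a} \<le> card (UNIV :: 'a set)" by (rule card_mono) auto
  then show ?thesis by simp
qed

lemma code_dim_eqI:
  fixes C :: "'a::{finite,field} list set"
  assumes "card C = card (UNIV :: 'a set) ^ k"
  shows "code_dim C = k"
  unfolding code_dim_def using assms one_less_card_UNIV_field[where 'a='a]
  by (intro the_equality) auto

lemma singleton_bound:
  fixes C :: "'a::{finite,field} list set"
  assumes len: "\<forall>w\<in>C. length w = n"
    and sub: "\<forall>v\<in>C. \<forall>w\<in>C. map2 (-) v w \<in> C"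
    and card: "card (UNIV :: 'a set) ^ (k - 1) < card C"
  shows "\<exists>w\<in>C. (\<exists>x\<in>set w. x \<noteq> 0) \<and> hweight w \<le> n + 1 - k"
proof -
  have "take (k - 1) ` C \<subseteq> {xs. set xs \<subseteq> UNIV \<and> length xs = min (k - 1) n}"
    using len by auto
  then have "card (take (k - 1) ` C) \<le> card {xs. set xs \<subseteq> (UNIV :: 'a set) \<and> length xs = min (k - 1) n}"
    by (rule card_mono[OF finite_lists_length_eq[OF finite_UNIV]])
  also have "\<dots> = card (UNIV :: 'a set) ^ min (k - 1) n"
    by (rule card_lists_length_eq) simp
  also have "\<dots> \<le> card (UNIV :: 'a set) ^ (k - 1)"
    using one_less_card_UNIV_field[where 'a='a] by (intro power_increasing) auto
  finally have "card (take (k - 1) ` C) < card C"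
    using card by linarith
  then have "\<not> inj_on (take (k - 1)) C"
    by (auto dest: card_image)
  then obtain v w where vw: "v \<in> C" "w \<in> C" "v \<noteq> w" "take (k - 1) v = take (k - 1) w"
    unfolding inj_on_def by blast
  define d where "d = map2 (-) v w"
  have d: "d \<in> C" "length d = n" "\<And>i. i < n \<Longrightarrow> d ! i = v ! i - w ! i"
    using vw len sub by (auto simp: d_def)
  have "v ! i = w ! i" if "i < k - 1" for i
    using vw(4) nth_take[OF that, of v] nth_take[OF that, of w] by simp
  then have support: "{i. i < length d \<and> d ! i \<noteq> 0} \<subseteq> {k - 1..<n}"
    using d(2,3) by (auto simp: not_less[symmetric])
  have "\<exists>i<n. v ! i \<noteq> w ! i"
  proof (rule ccontr)
    assume "\<not> (\<exists>i<n. v ! i \<noteq> w ! i)"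
    then have "v = w" using vw(1,2) len by (intro nth_equalityI) auto
    with vw(3) show False ..
  qed
  then obtain i where "i < n" "d ! i \<noteq> 0"
    using d(3) by auto
  then have "\<exists>x\<in>set d. x \<noteq> 0"
    using d(2) nth_mem by metis
  moreover have "hweight d \<le> n + 1 - k"
    using card_mono[OF _ support] by (simp add: hweight_def length_filter_conv_card)
  ultimately show ?thesis using d(1) by blast
qed

lemma is_MDS_iff_weight_bound:
  fixes C :: "'a::{finite,field} list set"
  assumes len: "\<forall>w\<in>C. length w = n"
    and sub: "\<forall>v\<in>C. \<forall>w\<in>C. map2 (-) v w \<in> C"
    and card: "card C = card (UNIV :: 'a set) ^ k"
    and "0 < k" and "k \<le> n"
  shows "is_MDS n C \<longleftrightarrow> (\<forall>w\<in>C. (\<exists>x\<in>set w. x \<noteq> 0) \<longrightarrow> n + 1 - k \<le> hweight w)"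
proof -
  define W where "W = {hweight w | w. w \<in> C \<and> (\<exists>x\<in>set w. x \<noteq> 0)}"
  have "W \<subseteq> {..n}"
    using len by (auto simp: W_def hweight_def)
  then have "finite W" by (rule finite_subset) simp
  have "card (UNIV :: 'a set) ^ (k - 1) < card C"
    using card \<open>0 < k\<close> one_less_card_UNIV_field[where 'a='a] by (simp add: power_strict_increasing)
  then have "\<exists>w\<in>C. (\<exists>x\<in>set w. x \<noteq> 0) \<and> hweight w \<le> n + 1 - k"
    by (rule singleton_bound[OF len sub])
  then obtain w0 where "w0 \<in> W" "w0 \<le> n + 1 - k"
    unfolding W_def by blast
  then have "W \<noteq> {}" and "Min W \<le> n + 1 - k"
    using Min_le[OF \<open>finite W\<close>] by fastforce+
  then have "Min W = n + 1 - k \<longleftrightarrow> n + 1 - k \<le> Min W" by auto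
  also have "\<dots> \<longleftrightarrow> (\<forall>x\<in>W. n + 1 - k \<le> x)"
    by (rule Min_ge_iff[OF \<open>finite W\<close> \<open>W \<noteq> {}\<close>])
  finally have "Min W = n + 1 - k \<longleftrightarrow> (\<forall>x\<in>W. n + 1 - k \<le> x)" .
  moreover have "is_MDS n C \<longleftrightarrow> Min W = n + 1 - k"
    using \<open>k \<le> n\<close> by (simp add: is_MDS_def min_dist_def code_dim_eqI[OF card] W_def Suc_diff_le)
  ultimately show ?thesis by (auto simp: W_def)
qed

lemma card_eval_code:
  fixes \<alpha> :: "nat \<Rightarrow> 'a::{finite,field}"
  assumes "inj_on \<alpha> {..<n}" and "E \<subseteq> {..<n}" and "E \<noteq> {}"
  shows "card (eval_word n \<alpha> ` supported_polys E) = card (UNIV :: 'a set) ^ card E"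
proof -
  have "inj_on (eval_word n \<alpha>) (supported_polys E)"
    using eval_word_eq_iff[OF assms(1)] degree_supported_less[OF _ assms(2,3)]
    by (auto intro: inj_onI)
  moreover have "finite E"
    using assms(2) by (rule finite_subset) simp
  ultimately show ?thesis
    by (simp add: card_image card_supported_polys)
qed

lemma is_MDS_eval_code_iff:
  fixes \<alpha> :: "nat \<Rightarrow> 'a::{finite,field}"
  assumes inj: "inj_on \<alpha> {..<n}" and E: "E \<subseteq> {..<n}" "E \<noteq> {}"
  shows "is_MDS n (eval_word n \<alpha> ` supported_polys E) \<longleftrightarrow>
    (\<forall>B. B \<subseteq> \<alpha> ` {..<n} \<and> card B = card E \<longrightarrow>
      (\<forall>f\<in>supported_polys E. (\<forall>b\<in>B. poly f b = 0) \<longrightarrow> f = 0))"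
proof -
  let ?S = "supported_polys E :: 'a poly set"
  have "finite E" using E(1) by (rule finite_subset) simp
  then have k: "0 < card E" "card E \<le> n"
    using E card_mono[OF _ E(1)] by (auto simp: card_gt_0_iff)
  have nonzero: "(\<exists>x\<in>set (eval_word n \<alpha> f). x \<noteq> 0) \<longleftrightarrow> f \<noteq> 0" if "f \<in> ?S" for f
    using eval_word_nonzero_iff[OF inj degree_supported_less[OF that E]] .
  have weight: "n + 1 - card E \<le> hweight (eval_word n \<alpha> f)
      \<longleftrightarrow> \<not> card E \<le> card {i. i < n \<and> poly f (\<alpha> i) = 0}" for f
  proof -
    have "card {i. i < n \<and> poly f (\<alpha> i) = 0} \<le> n"
      using card_mono[of "{..<n}" "{i. i < n \<and> poly f (\<alpha> i) = 0}"] by auto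
    then show ?thesis using k unfolding hweight_eval_word by linarith
  qed
  have "\<forall>v\<in>eval_word n \<alpha> ` ?S. \<forall>w\<in>eval_word n \<alpha> ` ?S. map2 (-) v w \<in> eval_word n \<alpha> ` ?S"
    by (auto simp: map2_minus_eval_word diff_supported_polys)
  then have "is_MDS n (eval_word n \<alpha> ` ?S) \<longleftrightarrow>
      (\<forall>f\<in>?S. f \<noteq> 0 \<longrightarrow> \<not> card E \<le> card {i. i < n \<and> poly f (\<alpha> i) = 0})"
    using is_MDS_iff_weight_bound[OF _ _ card_eval_code[OF inj E] k] nonzero weight by simp
  also have "\<dots> \<longleftrightarrow> (\<forall>B. B \<subseteq> \<alpha> ` {..<n} \<and> card B = card E \<longrightarrow>
      (\<forall>f\<in>?S. (\<forall>b\<in>B. poly f b = 0) \<longrightarrow> f = 0))"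
  proof -
    have "card E \<le> card {i. i < n \<and> poly f (\<alpha> i) = 0} \<longleftrightarrow>
        (\<exists>B\<subseteq>\<alpha> ` {..<n}. card B = card E \<and> (\<forall>b\<in>B. poly f b = 0))" for f
      using le_card_indices_iff[OF inj, where P = "\<lambda>x. poly f x = 0"] by simp
    then show ?thesis by blast
  qed
  finally show ?thesis .
qed

lemma range_sum_monom:
  fixes e :: "nat \<Rightarrow> nat"
  assumes "inj_on e {..<k}"
  shows "range (\<lambda>c. \<Sum>j<k. monom (c j) (e j)) = (supported_polys (e ` {..<k}) :: 'a::comm_monoid_add poly set)"
proof (intro equalityI subsetI)
  fix f :: "'a poly" assume "f \<in> range (\<lambda>c. \<Sum>j<k. monom (c j) (e j))"
  then obtain c where "f = (\<Sum>j<k. monom (c j) (e j))" by blast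
  then show "f \<in> supported_polys (e ` {..<k})"
    by (auto simp: supported_polys_def coeff_sum coeff_monom intro!: sum.neutral)
next
  fix f :: "'a poly" assume f: "f \<in> supported_polys (e ` {..<k})"
  have "(\<Sum>j<k. monom (coeff f (e j)) (e j)) = (\<Sum>m\<in>e ` {..<k}. monom (coeff f m) m)"
    by (simp add: sum.reindex[OF assms])
  also have "\<dots> = f"
    using f by (intro sum_monom_coeff_supported) simp_all
  finally show "f \<in> range (\<lambda>c. \<Sum>j<k. monom (c j) (e j))"
    by (auto intro: range_eqI[of f _ "\<lambda>j. coeff f (e j)"])
qed

lemma gen_code_monomials:
  fixes \<alpha> :: "nat \<Rightarrow> 'a::field" and e :: "nat \<Rightarrow> nat"
  assumes "inj_on e {..<k}"
  shows "gen_code k n (\<lambda>j i. \<alpha> i ^ e j) = eval_word n \<alpha> ` supported_polys (e ` {..<k})"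
proof -
  have "(\<Sum>j<k. c j * \<alpha> i ^ e j) = poly (\<Sum>j<k. monom (c j) (e j)) (\<alpha> i)" for c i
    by (simp add: poly_sum poly_monom)
  then have "gen_code k n (\<lambda>j i. \<alpha> i ^ e j) = eval_word n \<alpha> ` range (\<lambda>c. \<Sum>j<k. monom (c j) (e j))"
    by (auto simp: gen_code_def eval_word_def)
  then show ?thesis
    by (simp add: range_sum_monom[OF assms])
qed

section \<open>The code with the exponents \<open>k - 2\<close> and \<open>k - 1\<close> removed\<close>

lemma inj_on_row_exp: "inj_on (row_exp k) {..<k}"
  by (auto simp: inj_on_def row_exp_def)

lemma image_row_exp:
  assumes "2 \<le> k"
  shows "row_exp k ` {..<k} = {..k + 1} - {k - 2, k - 1}"
proof (intro equalityI subsetI)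
  fix m assume m: "m \<in> {..k + 1} - {k - 2, k - 1}"
  show "m \<in> row_exp k ` {..<k}"
  proof (cases "m < k - 2")
    case True
    then show ?thesis by (auto simp: row_exp_def image_iff intro!: bexI[of _ m])
  next
    case False
    with m assms have "m - 2 < k" "\<not> m - 2 < k - 2" "row_exp k (m - 2) = m"
      by (auto simp: row_exp_def)
    then show ?thesis by (metis image_eqI lessThan_iff)
  qed
qed (use assms in \<open>auto simp: row_exp_def split: if_splits\<close>)

theorem corollary3p5:
  fixes \<alpha> :: "nat \<Rightarrow> 'a::{finite,field}" and n k :: nat
  assumes "3 \<le> k" and "k + 2 \<le> n" and "n \<le> card (UNIV::'a set)"
    and "inj_on \<alpha> {..<n}"
  shows "is_MDS n (code_C n k \<alpha>) \<longleftrightarrow>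
    (\<forall>B. B \<subseteq> \<alpha> ` {..<n} \<and> card B = k \<longrightarrow>
        (esym 2 B)^2 - esym 1 B * esym 3 B \<noteq> 0)"
proof -
  let ?E = "row_exp k ` {..<k}"
  have E: "?E = {..k + 1} - {k - 2, k - 1}"
    using assms(1) by (intro image_row_exp) simp
  have "code_C n k \<alpha> = eval_word n \<alpha> ` supported_polys ?E"
    by (simp add: code_C_def gen_code_monomials inj_on_row_exp)
  moreover have "card ?E = k"
    using inj_on_row_exp by (simp add: card_image)
  moreover have "?E \<subseteq> {..<n}" "?E \<noteq> {}"
    using E assms(1,2) by auto
  ultimately have "is_MDS n (code_C n k \<alpha>) \<longleftrightarrow> (\<forall>B. B \<subseteq> \<alpha> ` {..<n} \<and> card B = k \<longrightarrow>
      (\<forall>f\<in>supported_polys ?E. (\<forall>b\<in>B. poly f b = 0) \<longrightarrow> f = 0))"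
    using is_MDS_eval_code_iff[OF assms(4)] by simp
  also have "\<dots> \<longleftrightarrow> (\<forall>B. B \<subseteq> \<alpha> ` {..<n} \<and> card B = k \<longrightarrow>
      (esym 2 B)^2 - esym 1 B * esym 3 B \<noteq> 0)"
  proof (intro all_cong1 imp_cong refl)
    fix B assume B: "B \<subseteq> \<alpha> ` {..<n} \<and> card B = k"
    then have "finite B" using finite_subset by blast
    with B assms(1) show "(\<forall>f\<in>supported_polys ?E. (\<forall>b\<in>B. poly f b = 0) \<longrightarrow> f = 0)
        \<longleftrightarrow> (esym 2 B)^2 - esym 1 B * esym 3 B \<noteq> 0"
      using ex_gap_poly_vanishing_iff[of B k] by (auto simp: E supported_polys_atMost_diff)
  qed
  finally show ?thesis .
qed

end
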